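(* Let $Q$ be a convex polytope in $\mathbb{R}^D$ with vertices in $\mathbb{Z}^D$, let $E$ be an edge of $Q$, and let $A\subset L(Q)$. Suppose $A\cap E = T_E(S)$, where $S\subset\mathbb{Z}$ and $T_E:\mathbb{R}\to\mathbb{R}^D$ is an injective affine transformation. Then there exists an injective affine transformation $T_{E+E}:\mathbb{R}\to\mathbb{R}^D$ such that $$(A+A)\cap (E+E) = T_{E+E}(S+S).$$
   Context: $L(Q) = Q\cap\mathbb{Z}^D$. For sets $X,Y$, $X+Y=\{x+y: x\in X,y\in Y\}$ (Minkowski sum). *)

theory Defs
  imports "HOL-Analysis.Analysis"
begin

definition minkowski_sum :: "'a::plus set \<Rightarrow> 'a set \<Rightarrow> 'a set" where
  "minkowski_sum X Y = {x + y | x y. x \<in> X \<and> y \<in> Y}"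

definition lattice_pts :: "(real ^ 'n) set \<Rightarrow> (real ^ 'n) set" where
  "lattice_pts Q = {x \<in> Q. \<forall>i. x $ i \<in> \<int>}"

definition affine_map :: "('a::real_vector \<Rightarrow> 'b::real_vector) \<Rightarrow> bool" where
  "affine_map f \<longleftrightarrow> linear (\<lambda>x. f x - f 0)"

text \<open>Edges: library notion edge_of (face of affine dimension 1).\<close>

end

theory Submission
  imports Defs
begin

text \<open>If two points of \<open>Q\<close> sum to a sum of two points of a face \<open>E\<close>, they have the same
  midpoint as a point of \<open>E\<close>, so by the defining property of faces both lie in \<open>E\<close>.
  Hence \<open>(A + A) \<inter> (E + E) = (A \<inter> E) + (A \<inter> E)\<close>, and an affine map \<open>T\<close> turns \<open>S + S\<close> into
  \<open>T(S) + T(S)\<close> after a translation by \<open>T 0\<close>.\<close>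

lemma face_of_add_eq_add_mem:
  fixes E Q :: "'a::real_vector set"
  assumes E: "E face_of Q" and "x \<in> Q" "y \<in> Q" "e1 \<in> E" "e2 \<in> E"
    and sum_eq: "x + y = e1 + e2"
  shows "x \<in> E \<and> y \<in> E"
proof -
  have "midpoint e1 e2 \<in> E"
    using convexD[OF face_of_imp_convex[OF E] \<open>e1 \<in> E\<close> \<open>e2 \<in> E\<close>, of "1/2" "1/2"]
    by (simp add: midpoint_def scaleR_add_right)
  moreover have mid: "midpoint x y = midpoint e1 e2"
    by (simp add: midpoint_def sum_eq)
  ultimately show ?thesis
  proof (cases "x = y")
    case True
    then show ?thesis using \<open>midpoint e1 e2 \<in> E\<close> mid by simp
  next
    case False
    then have "midpoint x y \<in> open_segment x y" by simp
    then show ?thesis using face_ofD[OF E _ \<open>x \<in> Q\<close> \<open>y \<in> Q\<close>] \<open>midpoint e1 e2 \<in> E\<close> mid by simp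
  qed
qed

lemma minkowski_sum_Int_face:
  fixes E Q :: "'a::real_vector set"
  assumes E: "E face_of Q" and "A \<subseteq> Q" "B \<subseteq> Q"
  shows "minkowski_sum A B \<inter> minkowski_sum E E = minkowski_sum (A \<inter> E) (B \<inter> E)"
proof
  show "minkowski_sum A B \<inter> minkowski_sum E E \<subseteq> minkowski_sum (A \<inter> E) (B \<inter> E)"
  proof
    fix z assume "z \<in> minkowski_sum A B \<inter> minkowski_sum E E"
    then obtain x y e1 e2 where z: "z = x + y" "x \<in> A" "y \<in> B" "z = e1 + e2" "e1 \<in> E" "e2 \<in> E"
      unfolding minkowski_sum_def by blast
    then have "x \<in> E \<and> y \<in> E"
      using face_of_add_eq_add_mem[OF E, of x y e1 e2] assms(2,3) by auto
    with z show "z \<in> minkowski_sum (A \<inter> E) (B \<inter> E)"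
      by (auto simp: minkowski_sum_def)
  qed
qed (auto simp: minkowski_sum_def)

lemma affine_map_add:
  assumes "affine_map T"
  shows "T a + T b = T (a + b) + T 0"
proof -
  have "T (a + b) - T 0 = (T a - T 0) + (T b - T 0)"
    using linear_add[of "\<lambda>x. T x - T 0"] assms by (simp add: affine_map_def)
  then show ?thesis by (simp add: algebra_simps)
qed

lemma minkowski_sum_image_affine_map:
  assumes "affine_map T"
  shows "minkowski_sum (T ` X) (T ` Y) = (\<lambda>z. T z + T 0) ` minkowski_sum X Y"
proof
  show "minkowski_sum (T ` X) (T ` Y) \<subseteq> (\<lambda>z. T z + T 0) ` minkowski_sum X Y"
    using affine_map_add[OF assms] unfolding minkowski_sum_def by fastforce
  show "(\<lambda>z. T z + T 0) ` minkowski_sum X Y \<subseteq> minkowski_sum (T ` X) (T ` Y)"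
    using affine_map_add[OF assms, symmetric] unfolding minkowski_sum_def by fastforce
qed

lemma affine_map_add_const:
  "affine_map T \<Longrightarrow> affine_map (\<lambda>z. T z + c)"
  by (simp add: affine_map_def)

theorem lemma4:
  fixes Q E A :: "(real ^ 'n) set" and S :: "real set" and T :: "real \<Rightarrow> real ^ 'n"
  assumes "polytope Q"
    and "\<forall>v. v extreme_point_of Q \<longrightarrow> (\<forall>i. v $ i \<in> \<int>)"
    and "E edge_of Q"
    and "A \<subseteq> lattice_pts Q"
    and "S \<subseteq> \<int>"
    and "affine_map T" and "inj T"
    and "A \<inter> E = T ` S"
  shows "\<exists>T2 :: real \<Rightarrow> real ^ 'n. affine_map T2 \<and> inj T2 \<and>
           minkowski_sum A A \<inter> minkowski_sum E E = T2 ` minkowski_sum S S"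
proof (intro exI conjI)
  have "E face_of Q" using \<open>E edge_of Q\<close> by (simp add: edge_of_def)
  moreover have "A \<subseteq> Q" using \<open>A \<subseteq> lattice_pts Q\<close> by (auto simp: lattice_pts_def)
  ultimately have "minkowski_sum A A \<inter> minkowski_sum E E = minkowski_sum (T ` S) (T ` S)"
    using minkowski_sum_Int_face \<open>A \<inter> E = T ` S\<close> by metis
  also have "\<dots> = (\<lambda>z. T z + T 0) ` minkowski_sum S S"
    using minkowski_sum_image_affine_map[OF \<open>affine_map T\<close>] .
  finally show "minkowski_sum A A \<inter> minkowski_sum E E = (\<lambda>z. T z + T 0) ` minkowski_sum S S" .
  show "affine_map (\<lambda>z. T z + T 0)" using affine_map_add_const[OF \<open>affine_map T\<close>] .
  show "inj (\<lambda>z. T z + T 0)" using \<open>inj T\<close> by (auto simp: inj_def)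
qed

end
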